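(* For $t>0$ and $0<v<1$ let $$L_v(t):=\frac{1}{\log t}\left(\frac{1-v}{v}\left(t-t^{1-v}\right)+\frac{v}{1-v}\left(t^{1-v}-1\right)\right)\quad (t\neq 1),\qquad L_v(1):=1.$$ Then for each fixed $t$ with $0<t\le 1$ the function $v\mapsto L_v(t)$ is increasing on $(0,1)$, and for each fixed $t\ge 1$ the function $v\mapsto L_v(t)$ is decreasing on $(0,1)$.
   Context: $L_v(t)$ is the representing function of the weighted logarithmic mean; the value at $t=1$ is its limit as $t\to1$. *)

theory Defs
  imports Complex_Main
begin

definition Lv :: "real \<Rightarrow> real \<Rightarrow> real" where
  "Lv v t = (if t = 1 then 1 else
     (1 / ln t) * ((1 - v) / v * (t - t powr (1 - v)) + v / (1 - v) * (t powr (1 - v) - 1)))"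

end

theory Submission
  imports Defs
begin

text \<open>With \<open>s = ln t\<close> we have \<open>Lv v t = Lv_num v s / s\<close>, so it suffices that \<open>Lv_num v s\<close>
  is nonincreasing in \<open>v\<close> for every \<open>s\<close>. Its \<open>v\<close>-derivative is
  \<open>Lv_num_deriv_numer v s / (v\<^sup>2 (1 - v)\<^sup>2)\<close>; the numerator vanishes at \<open>s = 0\<close>, and its
  \<open>s\<close>-derivative is \<open>exp ((1 - v) s)\<close> times a function bounded by \<open>-2 v\<^sup>2 (1 - v)\<^sup>2 s\<close>
  (from \<open>exp (v s) \<ge> 1 + v s\<close>), so it is nonpositive for \<open>s \<ge> 0\<close>. Negative \<open>s\<close> reduce to
  this case through the symmetry \<open>Lv_num v s = - exp s * Lv_num (1 - v) (- s)\<close>.\<close>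

definition Lv_num :: "real \<Rightarrow> real \<Rightarrow> real" where
  "Lv_num v s = (1 - v) / v * (exp s - exp ((1 - v) * s)) + v / (1 - v) * (exp ((1 - v) * s) - 1)"

definition Lv_num_deriv_numer :: "real \<Rightarrow> real \<Rightarrow> real" where
  "Lv_num_deriv_numer v s =
     - ((1 - v)^2 * exp s) + (v^2 + (1 - v)^2) * exp ((1 - v) * s) - v^2
     + v * (1 - v) * (1 - 2 * v) * s * exp ((1 - v) * s)"

lemma Lv_eq_Lv_num:
  assumes "0 < t" "t \<noteq> 1"
  shows "Lv v t = Lv_num v (ln t) / ln t"
  using assms by (simp add: Lv_def Lv_num_def powr_def)

lemma Lv_num_reflect:
  assumes "0 < v" "v < 1"
  shows "Lv_num v s = - exp s * Lv_num (1 - v) (- s)"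
proof -
  have "exp ((1 - v) * s) = exp s * exp (- (v * s))" "exp (- s) * exp s = 1"
    by (simp_all add: mult_exp_exp algebra_simps)
  with assms show ?thesis
    by (simp add: Lv_num_def field_simps)
qed

lemma has_real_derivative_Lv_num:
  assumes "0 < v" "v < 1"
  shows "((\<lambda>v. Lv_num v s) has_real_derivative Lv_num_deriv_numer v s / (v^2 * (1 - v)^2)) (at v)"
proof -
  have "v \<noteq> 0" "1 - v \<noteq> 0" using assms by auto
  then show ?thesis
    unfolding Lv_num_def Lv_num_deriv_numer_def
    by (auto intro!: derivative_eq_intros)
      (simp add: divide_simps, simp add: algebra_simps power2_eq_square)
qed

lemma Lv_num_deriv_numer_nonpos:
  assumes "0 < v" "v < 1" "0 \<le> s"
  shows "Lv_num_deriv_numer v s \<le> 0"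
proof -
  define h where "h x = - ((1 - v)^2 * exp (v * x)) + (1 - v) * (v^2 + (1 - v)^2)
    + v * (1 - v) * (1 - 2 * v) * (1 + (1 - v) * x)" for x
  have deriv: "((\<lambda>x. Lv_num_deriv_numer v x) has_real_derivative exp ((1 - v) * x) * h x) (at x)"
    for x
  proof -
    have "exp x = exp ((1 - v) * x) * exp (v * x)"
      by (simp add: mult_exp_exp algebra_simps)
    then show ?thesis
      unfolding Lv_num_deriv_numer_def h_def
      by (auto intro!: derivative_eq_intros simp: algebra_simps)
  qed
  have h_nonpos: "h x \<le> 0" if "0 \<le> x" for x
  proof -
    have "- ((1 - v)^2 * exp (v * x)) \<le> - ((1 - v)^2 * (1 + v * x))"
      using exp_ge_add_one_self[of "v * x"] by (simp add: mult_left_mono)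
    moreover have "- ((1 - v)^2 * (1 + v * x)) + (1 - v) * (v^2 + (1 - v)^2)
        + v * (1 - v) * (1 - 2 * v) * (1 + (1 - v) * x) = - 2 * v^2 * (1 - v)^2 * x"
      by (simp add: algebra_simps power2_eq_square)
    moreover have "- 2 * v^2 * (1 - v)^2 * x \<le> 0"
      using that by simp
    ultimately show ?thesis
      unfolding h_def by linarith
  qed
  have "Lv_num_deriv_numer v s \<le> Lv_num_deriv_numer v 0"
    by (rule deriv_nonpos_imp_antimono[OF deriv])
      (use assms h_nonpos in \<open>auto simp: mult_nonneg_nonpos\<close>)
  also have "Lv_num_deriv_numer v 0 = 0"
    by (simp add: Lv_num_deriv_numer_def algebra_simps power2_eq_square)
  finally show ?thesis .
qed

lemma Lv_num_antimono_nonneg: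
  assumes "0 \<le> s"
  shows "antimono_on {0<..<1} (\<lambda>v. Lv_num v s)"
proof (rule monotone_onI)
  fix v w :: real
  assume "v \<in> {0<..<1}" "w \<in> {0<..<1}" "v \<le> w"
  then show "Lv_num w s \<le> Lv_num v s"
    by (intro deriv_nonpos_imp_antimono[OF has_real_derivative_Lv_num])
      (use assms Lv_num_deriv_numer_nonpos in \<open>auto simp: divide_nonpos_nonneg\<close>)
qed

lemma Lv_num_antimono:
  "antimono_on {0<..<1} (\<lambda>v. Lv_num v s)"
proof (cases "0 \<le> s")
  case True
  then show ?thesis by (rule Lv_num_antimono_nonneg)
next
  case False
  show ?thesis
  proof (rule monotone_onI)
    fix v w :: real
    assume vw: "v \<in> {0<..<1}" "w \<in> {0<..<1}" "v \<le> w"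
    then have "Lv_num (1 - v) (- s) \<le> Lv_num (1 - w) (- s)"
      using monotone_onD[OF Lv_num_antimono_nonneg] False by auto
    then have "- exp s * Lv_num (1 - w) (- s) \<le> - exp s * Lv_num (1 - v) (- s)"
      by (simp add: mult_left_mono)
    then show "Lv_num w s \<le> Lv_num v s"
      using vw by (simp only: Lv_num_reflect[of v] Lv_num_reflect[of w] greaterThanLessThan_iff)
  qed
qed

theorem proposition2p7:
  shows "(\<forall>t::real. 0 < t \<and> t \<le> 1 \<longrightarrow> mono_on {0<..<1} (\<lambda>v. Lv v t)) \<and>
         (\<forall>t::real. 1 \<le> t \<longrightarrow> antimono_on {0<..<1} (\<lambda>v. Lv v t))"
proof (intro conjI allI impI monotone_onI)
  fix t v w :: real
  assume t: "0 < t \<and> t \<le> 1" and vw: "v \<in> {0<..<1}" "w \<in> {0<..<1}" "v \<le> w"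
  show "Lv v t \<le> Lv w t"
  proof (cases "t = 1")
    case False
    with t have "ln t < 0" by simp
    with t False vw show ?thesis
      using monotone_onD[OF Lv_num_antimono vw]
      by (simp add: Lv_eq_Lv_num divide_right_mono_neg)
  qed (simp add: Lv_def)
next
  fix t v w :: real
  assume t: "1 \<le> t" and vw: "v \<in> {0<..<1}" "w \<in> {0<..<1}" "v \<le> w"
  show "Lv w t \<le> Lv v t"
  proof (cases "t = 1")
    case False
    with t have "0 < ln t" by simp
    with t False vw show ?thesis
      using monotone_onD[OF Lv_num_antimono vw]
      by (simp add: Lv_eq_Lv_num divide_right_mono)
  qed (simp add: Lv_def)
qed

end
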